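(* Let $k\ge1$ be an integer, let $I=\{e^{i\theta}: -\pi/2\leq\theta\leq\pi/2\}$, and for $a>1$ consider the polynomials $u_n(z)=(z-a)^n$, $n\ge1$, and $f_n=u_n/\|u_n\|_{k,2}$ (so $\|f_n\|_{k,2}=1$). Then $\|f_n\|_{2,I}\to0$ as $n\to\infty$, the limit $$\beta_{k,a}:=\lim_{n\to\infty}\|f_n\|_2\left(\log(1/\|f_n\|_{2,I})\right)^k$$ exists and satisfies $\beta_{k,a}>0$, and $\beta_{k,a}\to1$ as $a\to\infty$.
   Context: $\mathbb D$ is the open unit disk and $\mathbb T$ the unit circle. For $f$ analytic in a neighbourhood of $\overline{\mathbb D}$, $\|f\|_2=\left(\frac{1}{2\pi}\int_0^{2\pi}|f(e^{i\theta})|^2d\theta\right)^{1/2}$, and $\|f\|_{k,2}^2=\sum_{j=0}^k\|f^{(j)}\|_2^2$ (derivatives with respect to $z$). For a subarc $I\subset\mathbb T$ of length $2\pi\lambda$, $\|f\|_{2,I}=\left(\frac{1}{2\pi\lambda}\int_I|f(e^{i\theta})|^2d\theta\right)^{1/2}$; here $\lambda=1/2$. *)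

theory Defs
  imports "HOL-Analysis.Analysis"
begin

definition circ_norm :: "(complex \<Rightarrow> complex) \<Rightarrow> real" where
  "circ_norm f = sqrt (integral {0..2*pi} (\<lambda>t. (cmod (f (cis t)))^2) / (2*pi))"

definition sob_norm :: "nat \<Rightarrow> (complex \<Rightarrow> complex) \<Rightarrow> real" where
  "sob_norm k f = sqrt (\<Sum>j\<le>k. (circ_norm ((deriv ^^ j) f))^2)"

text \<open>Normalised L2 norm on the arc I = {e^{it} : -pi/2 <= t <= pi/2}, length 2 pi lambda, lambda = 1/2.\<close>
definition arc_norm :: "(complex \<Rightarrow> complex) \<Rightarrow> real" where
  "arc_norm f = sqrt (integral {-pi/2..pi/2} (\<lambda>t. (cmod (f (cis t)))^2) / pi)"

definition u_poly :: "real \<Rightarrow> nat \<Rightarrow> complex \<Rightarrow> complex" where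
  "u_poly a n = (\<lambda>z. (z - complex_of_real a) ^ n)"

definition f_norm :: "nat \<Rightarrow> real \<Rightarrow> nat \<Rightarrow> complex \<Rightarrow> complex" where
  "f_norm k a n = (\<lambda>z. u_poly a n z / complex_of_real (sob_norm k (u_poly a n)))"

definition beta_seq :: "nat \<Rightarrow> real \<Rightarrow> nat \<Rightarrow> real" where
  "beta_seq k a n = circ_norm (f_norm k a n) * (ln (1 / arc_norm (f_norm k a n))) ^ k"

end

theory Submission
  imports Defs "HOL-Real_Asymp.Real_Asymp"
begin

text \<open>
  On the unit circle |u_n(e^{it})|^2 = w(t)^n with w(t) = |e^{it} - a|^2 = 1 + a^2 - 2a cos t.
  The weight w peaks at (a+1)^2 at t = pi, whereas its maximum on the arc I is 1 + a^2, attained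
  at the endpoints. A Laplace-type estimate shows that (1/n) ln of the n-th moment of w, over
  the circle or over I, tends to ln of the maximum of w there, and that consecutive moments over
  the circle have ratio tending to (a+1)^2. Hence in ||u_n||_{k,2} the top derivative dominates,
  ||u_n||_{k,2} ~ n^k (a+1)^{-k} ||u_n||_2, so that n^k ||f_n||_2 tends to (a+1)^k, while
  (1/n) ln (1/||f_n||_{2,I}) tends to (1/2) ln ((a+1)^2 / (1+a^2)) > 0. Thus ||f_n||_{2,I} -> 0
  and beta_{k,a} = ((a+1)/2 * ln ((a+1)^2 / (1+a^2)))^k, which tends to 1 as a -> infinity.
\<close>

lemma abs_cos_diff_le: "\<bar>cos x - cos y\<bar> \<le> \<bar>x - y\<bar>" for x y :: real
proof -
  have "\<bar>cos x - cos y\<bar> = 2 * \<bar>sin ((x + y) / 2)\<bar> * \<bar>sin ((y - x) / 2)\<bar>"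
    by (simp add: cos_diff_cos abs_mult)
  also have "\<dots> \<le> 2 * 1 * \<bar>(y - x) / 2\<bar>"
    by (intro mult_mono abs_sin_x_le_abs_x) auto
  finally show ?thesis by simp
qed

lemma real_sqrt_square_mult_divide: "sqrt (b\<^sup>2 * x / d) = \<bar>b\<bar> * sqrt (x / d)" for b x d :: real
  by (metis real_sqrt_abs real_sqrt_mult times_divide_eq_right)

lemma ln_sq_add_one_less:
  fixes a :: real
  assumes "0 < a"
  shows "ln (1 + a^2) < ln ((a + 1)^2)"
proof -
  have "0 < 1 + a^2" by (simp add: add_pos_nonneg)
  moreover have "1 + a^2 < (a + 1)^2" using assms by (simp add: power2_eq_square algebra_simps)
  ultimately show ?thesis by (meson ln_less_cancel_iff less_trans)
qed

lemma ln_over_n_tendsto_of_exponential_bounds: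
  fixes X :: "nat \<Rightarrow> real"
  assumes "0 < c" "0 < D" "0 < B"
    and lower: "\<And>n. n \<ge> 1 \<Longrightarrow> c * B ^ n / n \<le> X n"
    and upper: "\<And>n. n \<ge> 1 \<Longrightarrow> X n \<le> D * B ^ n"
  shows "(\<lambda>n. ln (X n) / n) \<longlonglongrightarrow> ln B"
proof (rule tendsto_sandwich)
  have lower_pos: "0 < c * B ^ n / n" if "n \<ge> 1" for n
    using assms that by simp
  show "eventually (\<lambda>n. ln B + (ln c - ln n) / n \<le> ln (X n) / n) sequentially"
    using eventually_ge_at_top[of 1]
  proof eventually_elim
    case (elim n)
    have "ln c + n * ln B - ln n = ln (c * B ^ n / n)"
      using assms elim by (simp add: ln_mult ln_div ln_realpow)
    also have "\<dots> \<le> ln (X n)"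
      using lower[OF elim] lower_pos[OF elim] by (rule ln_mono)
    finally have "(ln c + n * ln B - ln n) / n \<le> ln (X n) / n"
      by (rule divide_right_mono) simp
    also have "(ln c + n * ln B - ln n) / n = ln B + (ln c - ln n) / n"
      using elim by (simp add: diff_divide_distrib add_divide_distrib)
    finally show ?case .
  qed
  show "eventually (\<lambda>n. ln (X n) / n \<le> ln B + ln D / n) sequentially"
    using eventually_ge_at_top[of 1]
  proof eventually_elim
    case (elim n)
    have "ln (X n) \<le> ln (D * B ^ n)"
      using upper[OF elim] lower[OF elim] lower_pos[OF elim] by (intro ln_mono) auto
    also have "\<dots> = ln D + n * ln B"
      using assms by (simp add: ln_mult ln_realpow)
    finally have "ln (X n) / n \<le> (ln D + n * ln B) / n"
      by (rule divide_right_mono) simp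
    also have "(ln D + n * ln B) / n = ln B + ln D / n"
      using elim by (simp add: add_divide_distrib)
    finally show ?case .
  qed
  show "(\<lambda>n. ln B + (ln c - ln (real n)) / real n) \<longlonglongrightarrow> ln B" by real_asymp
  show "(\<lambda>n. ln B + ln D / real n) \<longlonglongrightarrow> ln B" by real_asymp
qed

lemma shifted_ratio_tendsto:
  fixes X :: "nat \<Rightarrow> real"
  assumes pos: "\<And>n. 0 < X n" and ratio: "(\<lambda>n. X (Suc n) / X n) \<longlonglongrightarrow> W" and "W \<noteq> 0"
  shows "(\<lambda>n. X (n - j) / X n) \<longlonglongrightarrow> 1 / W ^ j"
proof (induction j)
  case 0
  show ?case using pos by (simp add: less_imp_neq[symmetric])
next
  case (Suc j)
  have "(\<lambda>n. X (Suc (n - Suc j)) / X (n - Suc j)) \<longlonglongrightarrow> W"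
    by (rule filterlim_compose[OF ratio filterlim_minus_const_nat_at_top])
  then have "(\<lambda>n. 1 / (X (Suc (n - Suc j)) / X (n - Suc j)) * (X (n - j) / X n))
      \<longlonglongrightarrow> 1 / W * (1 / W ^ j)"
    using \<open>W \<noteq> 0\<close> by (intro tendsto_mult tendsto_divide tendsto_const Suc.IH)
  moreover have "eventually (\<lambda>n. 1 / (X (Suc (n - Suc j)) / X (n - Suc j)) * (X (n - j) / X n)
      = X (n - Suc j) / X n) sequentially"
    using eventually_ge_at_top[of "Suc j"]
  proof eventually_elim
    case (elim n)
    then have "Suc (n - Suc j) = n - j" by simp
    then show ?case using pos[of "n - j"] by simp
  qed
  ultimately show ?case by (simp add: tendsto_cong)
qed

lemma falling_product_over_power_tendsto:
  "(\<lambda>n. real (\<Prod>i<j. n - i) / real n ^ j) \<longlonglongrightarrow> 1"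
proof -
  have "(\<lambda>n. \<Prod>i<j. 1 - real i / real n) \<longlonglongrightarrow> (\<Prod>i<j. 1 - 0)"
    by (intro tendsto_prod tendsto_diff tendsto_const lim_const_over_n)
  moreover have "eventually (\<lambda>n. (\<Prod>i<j. 1 - real i / real n) = real (\<Prod>i<j. n - i) / real n ^ j)
      sequentially"
    using eventually_ge_at_top[of "Suc j"]
  proof eventually_elim
    case (elim n)
    have "real (\<Prod>i<j. n - i) / real n ^ j = (\<Prod>i<j. (real n - real i) / real n)"
      using elim by (simp add: of_nat_diff prod_dividef)
    also have "\<dots> = (\<Prod>i<j. 1 - real i / real n)"
      using elim by (intro prod.cong) (auto simp: field_simps)
    finally show ?case by simp
  qed
  ultimately show ?thesis by (simp add: tendsto_cong)
qed

section \<open>Power moments of a nonnegative continuous function\<close>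

definition power_moment :: "(real \<Rightarrow> real) \<Rightarrow> real \<Rightarrow> real \<Rightarrow> nat \<Rightarrow> real" where
  "power_moment g x y m = integral {x..y} (\<lambda>t. g t ^ m)"

context
  fixes g :: "real \<Rightarrow> real" and x y :: real
  assumes continuous_g: "continuous_on {x..y} g"
    and nonneg_g: "\<And>t. t \<in> {x..y} \<Longrightarrow> 0 \<le> g t"
begin

lemma power_integrable_on: "(\<lambda>t. g t ^ m) integrable_on {x..y}"
  by (intro integrable_continuous_interval continuous_on_power continuous_g)

lemma power_moment_nonneg: "0 \<le> power_moment g x y m"
  unfolding power_moment_def
  by (intro integral_nonneg power_integrable_on zero_le_power nonneg_g)

lemma power_moment_le:
  assumes "x \<le> y" and "\<And>t. t \<in> {x..y} \<Longrightarrow> g t \<le> B"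
  shows "power_moment g x y m \<le> (y - x) * B ^ m"
proof -
  have "power_moment g x y m \<le> integral {x..y} (\<lambda>t. B ^ m)"
    unfolding power_moment_def
    by (rule integral_le) (auto intro!: power_integrable_on power_mono assms nonneg_g)
  then show ?thesis using assms(1) by simp
qed

lemma power_moment_ge:
  assumes "{c..d} \<subseteq> {x..y}" "c \<le> d" "0 \<le> b" "\<And>t. t \<in> {c..d} \<Longrightarrow> b \<le> g t"
  shows "(d - c) * b ^ m \<le> power_moment g x y m"
proof -
  have "(d - c) * b ^ m = integral {c..d} (\<lambda>t. b ^ m)" using assms(2) by simp
  also have "\<dots> \<le> integral {c..d} (\<lambda>t. g t ^ m)"
    using assms power_integrable_on
    by (intro integral_le integrable_on_subinterval[OF power_integrable_on assms(1)])
      (auto intro!: power_mono)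
  also have "\<dots> \<le> power_moment g x y m"
    unfolding power_moment_def using assms(1)
    by (intro integral_subset_le) (auto intro!: power_integrable_on
        integrable_on_subinterval[OF power_integrable_on] zero_le_power nonneg_g)
  finally show ?thesis .
qed

lemma power_moment_Suc_le:
  assumes "\<And>t. t \<in> {x..y} \<Longrightarrow> g t \<le> B"
  shows "power_moment g x y (Suc m) \<le> B * power_moment g x y m"
proof -
  have "power_moment g x y (Suc m) \<le> integral {x..y} (\<lambda>t. B * g t ^ m)"
    unfolding power_moment_def
    by (intro integral_le) (auto intro!: power_integrable_on integrable_on_mult_right
        power_integrable_on[of "Suc m", simplified] mult_right_mono zero_le_power assms nonneg_g)
  then show ?thesis unfolding power_moment_def by simp
qed

lemma power_moment_Suc_ge:
  assumes "x \<le> y" "0 \<le> q"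
  shows "q * power_moment g x y m - (y - x) * q ^ Suc m \<le> power_moment g x y (Suc m)"
proof -
  have pointwise: "q * g t ^ m - q ^ Suc m \<le> g t ^ Suc m" if "t \<in> {x..y}" for t
  proof (cases "q \<le> g t")
    case True
    then have "q * g t ^ m \<le> g t * g t ^ m"
      using nonneg_g[OF that] by (intro mult_right_mono) auto
    moreover have "0 \<le> q * q ^ m" using assms(2) by simp
    ultimately show ?thesis by simp
  next
    case False
    then have "g t ^ m \<le> q ^ m" using nonneg_g[OF that] by (intro power_mono) auto
    then have "q * g t ^ m \<le> q * q ^ m" using assms(2) by (rule mult_left_mono)
    moreover have "0 \<le> g t * g t ^ m" using nonneg_g[OF that] by simp
    ultimately show ?thesis by simp
  qed
  have "integral {x..y} (\<lambda>t. q * g t ^ m - q ^ Suc m) \<le> power_moment g x y (Suc m)"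
    unfolding power_moment_def using pointwise
    by (intro integral_le) (auto intro!: power_integrable_on power_integrable_on[of "Suc m", simplified]
        integrable_diff integrable_on_mult_right)
  moreover have "integral {x..y} (\<lambda>t. q * g t ^ m - q ^ Suc m)
      = q * power_moment g x y m - (y - x) * q ^ Suc m"
    unfolding power_moment_def using assms(1)
    by (subst integral_diff) (auto intro!: power_integrable_on integrable_on_mult_right)
  ultimately show ?thesis by simp
qed

lemma power_moment_ge_near_peak:
  assumes "{c - 1 / real m..c} \<subseteq> {x..y}" "m \<ge> 1" "0 \<le> B" "0 \<le> r" "r \<le> 1"
    and "\<And>t. t \<in> {c - 1 / real m..c} \<Longrightarrow> B * (1 - r / m) \<le> g t"
  shows "(1 - r) * B ^ m / m \<le> power_moment g x y m"
proof -
  have m_pos: "real m \<ge> 1" using assms(2) by simp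
  have "r / m \<le> 1" using assms(5) m_pos by (simp add: divide_le_eq)
  have "1 + real m * (- (r / m)) \<le> (1 + - (r / m)) ^ m"
    using \<open>r / m \<le> 1\<close> by (intro Bernoulli_inequality) simp
  then have Bernoulli: "1 - r \<le> (1 - r / m) ^ m" using m_pos by simp
  have "(1 - r) * B ^ m \<le> (1 - r / m) ^ m * B ^ m"
    using Bernoulli assms(3) by (intro mult_right_mono) auto
  then have "(1 - r) * B ^ m / m \<le> (1 / m) * (B * (1 - r / m)) ^ m"
    using m_pos by (simp add: power_mult_distrib divide_right_mono mult.commute)
  also have "\<dots> \<le> power_moment g x y m"
    using power_moment_ge[OF assms(1) _ _ assms(6)] assms(3,5) m_pos \<open>r / m \<le> 1\<close> by simp
  finally show ?thesis .
qed

lemma power_moment_ratio_tendsto: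
  assumes "x \<le> y" "0 < c" "0 < W" and le_W: "\<And>t. t \<in> {x..y} \<Longrightarrow> g t \<le> W"
    and lower: "\<And>m. m \<ge> 1 \<Longrightarrow> c * W ^ m / m \<le> power_moment g x y m"
  shows "(\<lambda>m. power_moment g x y (Suc m) / power_moment g x y m) \<longlonglongrightarrow> W"
proof (rule tendstoI)
  fix e :: real assume "e > 0"
  define q where "q = W - min e W / 2"
  have q: "0 < q" "q < W" "W - e \<le> 2 * q - W" using \<open>e > 0\<close> assms(3) by (auto simp: q_def)
  define K where "K = (y - x) * q / c"
  \<comment> \<open>Pointwise g^(m+1) >= q g^m - q^(m+1), and the resulting defect (y - x) q^(m+1) is
      negligible against the m-th moment, which is at least c W^m / m.\<close>
  have "(\<lambda>m. K * (real m * (q / W) ^ m)) \<longlonglongrightarrow> K * 0"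
    using q by (intro tendsto_mult tendsto_const powser_times_n_limit_0) simp
  then have small: "eventually (\<lambda>m. K * (real m * (q / W) ^ m) < W - q) sequentially"
    using q by (intro order_tendstoD(2)) auto
  show "eventually (\<lambda>m. dist (power_moment g x y (Suc m) / power_moment g x y m) W < e) sequentially"
    using small eventually_ge_at_top[of 1]
  proof eventually_elim
    case (elim m)
    let ?M = "power_moment g x y"
    have m_pos: "real m \<ge> 1" using elim by simp
    have lower_pos: "0 < c * W ^ m / m" using assms m_pos by simp
    then have M_pos: "0 < ?M m" using lower[OF elim(2)] by linarith
    have "?M (Suc m) / ?M m \<le> W"
      using power_moment_Suc_le[OF le_W] M_pos by (simp add: divide_le_eq mult.commute)
    moreover have "(y - x) * q ^ Suc m / ?M m \<le> (y - x) * q ^ Suc m / (c * W ^ m / m)"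
      using lower[OF elim(2)] lower_pos assms(1) q M_pos
      by (intro divide_left_mono mult_pos_pos) auto
    moreover have "(y - x) * q ^ Suc m / (c * W ^ m / m) = K * (real m * (q / W) ^ m)"
      using assms m_pos by (simp add: K_def field_simps power_divide)
    moreover have "q - (y - x) * q ^ Suc m / ?M m \<le> ?M (Suc m) / ?M m"
    proof -
      have "q - (y - x) * q ^ Suc m / ?M m = (q * ?M m - (y - x) * q ^ Suc m) / ?M m"
        using M_pos by (simp add: field_simps)
      also have "\<dots> \<le> ?M (Suc m) / ?M m"
        using power_moment_Suc_ge[OF assms(1), of q m] q M_pos by (intro divide_right_mono) auto
      finally show ?thesis .
    qed
    ultimately show ?case using elim(1) q \<open>e > 0\<close> by (simp add: dist_real_def abs_if)
  qed
qed

end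

section \<open>Moments of the weight |e^{it} - a|^2\<close>

definition cis_sqdist :: "real \<Rightarrow> real \<Rightarrow> real" where
  "cis_sqdist a t = (cmod (cis t - complex_of_real a))^2"

lemma cis_sqdist_eq: "cis_sqdist a t = 1 + a^2 - 2*a*cos t"
proof -
  have "cis_sqdist a t = (cos t - a)^2 + (sin t)^2"
    unfolding cis_sqdist_def cmod_def by (simp add: cis.code)
  also have "\<dots> = 1 + a^2 - 2*a*cos t"
    using sin_cos_squared_add[of t] by (simp add: power2_eq_square algebra_simps)
  finally show ?thesis .
qed

lemma cis_sqdist_nonneg: "0 \<le> cis_sqdist a t"
  by (simp add: cis_sqdist_def)

lemma continuous_on_cis_sqdist: "continuous_on S (cis_sqdist a)"
  unfolding cis_sqdist_def by (intro continuous_intros)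

lemma cis_sqdist_ge_Lipschitz:
  assumes "0 \<le> a"
  shows "cis_sqdist a t0 - 2 * a * \<bar>t - t0\<bar> \<le> cis_sqdist a t"
proof -
  have "2 * a * (cos t - cos t0) \<le> 2 * a * \<bar>t - t0\<bar>"
    using abs_cos_diff_le[of t t0] assms by (intro mult_left_mono) auto
  then show ?thesis unfolding cis_sqdist_eq by (simp add: algebra_simps)
qed

lemma cis_sqdist_le: "0 \<le> a \<Longrightarrow> cis_sqdist a t \<le> (a + 1)^2"
  using cos_ge_minus_one[of t] mult_left_mono[of "-1" "cos t" "2*a"]
  unfolding cis_sqdist_eq by (simp add: power2_eq_square algebra_simps)

lemma cis_sqdist_le_on_arc:
  "0 \<le> a \<Longrightarrow> t \<in> {-pi/2..pi/2} \<Longrightarrow> cis_sqdist a t \<le> 1 + a^2"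
  using cos_ge_zero[of t] unfolding cis_sqdist_eq by simp

lemma cis_sqdist_ge: "0 \<le> a \<Longrightarrow> (a - 1)^2 \<le> cis_sqdist a t"
  using cos_le_one[of t] mult_left_mono[of "cos t" 1 "2*a"]
  unfolding cis_sqdist_eq by (simp add: power2_eq_square algebra_simps)

lemma cmod_cis_minus_power_sq: "(cmod ((cis t - complex_of_real a) ^ n))^2 = cis_sqdist a t ^ n"
  unfolding cis_sqdist_def by (simp add: norm_power flip: power_mult) (simp add: mult.commute)

abbreviation circle_moment :: "real \<Rightarrow> nat \<Rightarrow> real" where
  "circle_moment a \<equiv> power_moment (cis_sqdist a) 0 (2*pi)"

abbreviation arc_moment :: "real \<Rightarrow> nat \<Rightarrow> real" where
  "arc_moment a \<equiv> power_moment (cis_sqdist a) (-pi/2) (pi/2)"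

lemma circle_moment_nonneg: "0 \<le> circle_moment a m"
  by (rule power_moment_nonneg[OF continuous_on_cis_sqdist]) (simp add: cis_sqdist_nonneg)

lemma cis_sqdist_moment_pos:
  assumes "1 < a" "x < y"
  shows "0 < power_moment (cis_sqdist a) x y m"
proof -
  have "0 < (y - x) * ((a - 1)^2) ^ m" using assms by simp
  also have "\<dots> \<le> power_moment (cis_sqdist a) x y m"
    using assms
    by (intro power_moment_ge[OF continuous_on_cis_sqdist]) (auto simp: cis_sqdist_nonneg cis_sqdist_ge)
  finally show ?thesis .
qed

lemma cis_sqdist_moment_ge_near_peak:
  assumes "0 \<le> a" "cos t0 \<le> 0" "m \<ge> 1" "{t0 - 1 / real m..t0} \<subseteq> {x..y}"
  shows "(1 - 2 * a / cis_sqdist a t0) * cis_sqdist a t0 ^ m / m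
    \<le> power_moment (cis_sqdist a) x y m"
proof -
  have peak_ge: "2 * a \<le> cis_sqdist a t0"
    using assms(1,2) mult_nonneg_nonpos[of a "cos t0"] zero_le_power2[of "a - 1"]
    unfolding cis_sqdist_eq by (simp add: power2_eq_square algebra_simps)
  have "0 < cis_sqdist a t0"
    using assms(1,2) mult_nonneg_nonpos[of a "cos t0"] add_pos_nonneg[OF zero_less_one, of "a^2"]
    unfolding cis_sqdist_eq by simp
  have near: "cis_sqdist a t0 * (1 - 2 * a / cis_sqdist a t0 / m) \<le> cis_sqdist a t"
    if "t \<in> {t0 - 1 / real m..t0}" for t
  proof -
    have "2 * a * \<bar>t - t0\<bar> \<le> 2 * a / m"
      using that assms(1) by (intro mult_left_mono[of _ "1 / real m", simplified]) auto
    then show ?thesis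
      using cis_sqdist_ge_Lipschitz[OF assms(1), of t0 t] \<open>0 < cis_sqdist a t0\<close>
      by (simp add: field_simps)
  qed
  show ?thesis
    using peak_ge \<open>0 < cis_sqdist a t0\<close>
    by (intro power_moment_ge_near_peak[OF continuous_on_cis_sqdist _ assms(4,3) _ _ _ near])
      (auto simp: cis_sqdist_nonneg assms(1))
qed

lemma circle_moment_lower:
  assumes "0 \<le> a" "m \<ge> 1"
  shows "(1 - 2 * a / (a + 1)^2) * ((a + 1)^2) ^ m / m \<le> circle_moment a m"
proof -
  have "1 / real m \<le> 1" using assms(2) by simp
  then have "{pi - 1 / real m..pi} \<subseteq> {0..2*pi}" using pi_ge_two by auto
  moreover have "cis_sqdist a pi = (a + 1)^2"
    by (simp add: cis_sqdist_eq power2_eq_square algebra_simps)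
  ultimately show ?thesis
    using cis_sqdist_moment_ge_near_peak[OF assms(1) _ assms(2), of pi] by simp
qed

lemma arc_moment_lower:
  assumes "0 \<le> a" "m \<ge> 1"
  shows "(1 - 2 * a / (1 + a^2)) * (1 + a^2) ^ m / m \<le> arc_moment a m"
proof -
  have "1 / real m \<le> 1" using assms(2) by simp
  then have "{pi/2 - 1 / real m..pi/2} \<subseteq> {-pi/2..pi/2}" using pi_ge_two by auto
  moreover have "cis_sqdist a (pi/2) = 1 + a^2" by (simp add: cis_sqdist_eq)
  ultimately show ?thesis
    using cis_sqdist_moment_ge_near_peak[OF assms(1) _ assms(2), of "pi/2"] by simp
qed

lemma circle_moment_ratio_tendsto:
  assumes "1 < a"
  shows "(\<lambda>m. circle_moment a (Suc m) / circle_moment a m) \<longlonglongrightarrow> (a + 1)^2"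
proof (rule power_moment_ratio_tendsto[OF continuous_on_cis_sqdist cis_sqdist_nonneg])
  have "2 * a < (a + 1)^2" by (simp add: power2_eq_square algebra_simps add_pos_nonneg)
  then show "0 < 1 - 2 * a / (a + 1)^2" using assms by simp
  show "(1 - 2 * a / (a + 1)^2) * ((a + 1)^2) ^ m / m \<le> circle_moment a m" if "m \<ge> 1" for m
    using circle_moment_lower[OF _ that] assms by simp
qed (use assms cis_sqdist_le in auto)

lemma ln_circle_moment_over_n:
  assumes "1 < a"
  shows "(\<lambda>n. ln (circle_moment a n) / n) \<longlonglongrightarrow> ln ((a + 1)^2)"
proof (rule ln_over_n_tendsto_of_exponential_bounds)
  have "2 * a < (a + 1)^2" by (simp add: power2_eq_square algebra_simps add_pos_nonneg)
  then show "0 < 1 - 2 * a / (a + 1)^2" using assms by simp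
  show "(1 - 2 * a / (a + 1)^2) * ((a + 1)^2) ^ n / n \<le> circle_moment a n" if "n \<ge> 1" for n
    using circle_moment_lower[OF _ that] assms by simp
  have "circle_moment a n \<le> (2*pi - 0) * ((a + 1)^2) ^ n" for n
    using assms by (intro power_moment_le[OF continuous_on_cis_sqdist cis_sqdist_nonneg])
      (auto intro: cis_sqdist_le)
  then show "circle_moment a n \<le> 2 * pi * ((a + 1)^2) ^ n" for n by simp
qed (use assms in auto)

lemma ln_arc_moment_over_n:
  assumes "1 < a"
  shows "(\<lambda>n. ln (arc_moment a n) / n) \<longlonglongrightarrow> ln (1 + a^2)"
proof (rule ln_over_n_tendsto_of_exponential_bounds)
  have "0 < (a - 1)^2" "0 < 1 + a^2" using assms by (auto intro: add_pos_nonneg)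
  then have "2 * a < 1 + a^2" by (simp add: power2_eq_square algebra_simps)
  then show "0 < 1 - 2 * a / (1 + a^2)" using \<open>0 < 1 + a^2\<close> by simp
  show "(1 - 2 * a / (1 + a^2)) * (1 + a^2) ^ n / n \<le> arc_moment a n" if "n \<ge> 1" for n
    using arc_moment_lower[OF _ that] assms by simp
  have "arc_moment a n \<le> (pi/2 - -pi/2) * (1 + a^2) ^ n" for n
    using assms by (intro power_moment_le[OF continuous_on_cis_sqdist cis_sqdist_nonneg])
      (auto intro: cis_sqdist_le_on_arc)
  then show "arc_moment a n \<le> pi * (1 + a^2) ^ n" for n by simp
qed (use assms in \<open>auto intro: add_pos_nonneg\<close>)

section \<open>The norms of u_n and f_n\<close>

lemma higher_deriv_power_shift:
  fixes c :: complex
  shows "(deriv ^^ j) (\<lambda>z. (z - c) ^ n) = (\<lambda>z. of_nat (\<Prod>i<j. n - i) * (z - c) ^ (n - j))"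
proof (induction j)
  case 0
  show ?case by simp
next
  case (Suc j)
  have "deriv (\<lambda>z. of_nat (\<Prod>i<j. n - i) * (z - c) ^ (n - j)) z
      = of_nat (\<Prod>i<Suc j. n - i) * (z - c) ^ (n - Suc j)" for z
  proof -
    have "((\<lambda>z. of_nat (\<Prod>i<j. n - i) * (z - c) ^ (n - j)) has_field_derivative
        of_nat (\<Prod>i<j. n - i) * (of_nat (n - j) * (z - c) ^ (n - j - 1))) (at z)"
      by (auto intro!: derivative_eq_intros)
    then show ?thesis by (simp add: DERIV_imp_deriv mult.assoc)
  qed
  then show ?case using Suc.IH by auto
qed

lemma circ_norm_scale: "circ_norm (\<lambda>z. c * f z) = cmod c * circ_norm f"
  unfolding circ_norm_def by (simp add: norm_mult power_mult_distrib real_sqrt_square_mult_divide)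

lemma arc_norm_scale: "arc_norm (\<lambda>z. c * f z) = cmod c * arc_norm f"
  unfolding arc_norm_def by (simp add: norm_mult power_mult_distrib real_sqrt_square_mult_divide)

lemma sob_norm_nonneg: "0 \<le> sob_norm k f"
  unfolding sob_norm_def by (simp add: sum_nonneg)

lemma circ_norm_u_poly: "circ_norm (u_poly a n) = sqrt (circle_moment a n / (2*pi))"
  unfolding circ_norm_def u_poly_def power_moment_def cmod_cis_minus_power_sq ..

lemma arc_norm_u_poly: "arc_norm (u_poly a n) = sqrt (arc_moment a n / pi)"
  unfolding arc_norm_def u_poly_def power_moment_def cmod_cis_minus_power_sq ..

lemma sob_norm_u_poly_sq:
  "sob_norm k (u_poly a n) ^ 2
    = (\<Sum>j\<le>k. real (\<Prod>i<j. n - i) ^ 2 * circle_moment a (n - j)) / (2*pi)"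
proof -
  have "circ_norm ((deriv ^^ j) (u_poly a n)) ^ 2
      = real (\<Prod>i<j. n - i) ^ 2 * circle_moment a (n - j) / (2*pi)" for j
  proof -
    have "(deriv ^^ j) (u_poly a n) = (\<lambda>z. of_nat (\<Prod>i<j. n - i) * u_poly a (n - j) z)"
      unfolding u_poly_def by (rule higher_deriv_power_shift)
    then show ?thesis
      using circle_moment_nonneg[of a "n - j"]
      by (simp only: circ_norm_scale circ_norm_u_poly norm_of_nat power_mult_distrib)
        (simp add: power_mult_distrib)
  qed
  then show ?thesis
    unfolding sob_norm_def
    by (simp add: sum_divide_distrib sum_nonneg circle_moment_nonneg)
qed

lemma sob_norm_u_poly_pos:
  assumes "1 < a"
  shows "0 < sob_norm k (u_poly a n)"
proof -
  have "0 < circle_moment a n" using assms by (intro cis_sqdist_moment_pos) auto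
  also have "\<dots> \<le> (\<Sum>j\<le>k. real (\<Prod>i<j. n - i) ^ 2 * circle_moment a (n - j))"
    using member_le_sum[of 0 "{..k}" "\<lambda>j. real (\<Prod>i<j. n - i) ^ 2 * circle_moment a (n - j)"]
    by (simp add: circle_moment_nonneg)
  finally have "0 < sob_norm k (u_poly a n) ^ 2" by (simp add: sob_norm_u_poly_sq)
  then show ?thesis using sob_norm_nonneg[of k "u_poly a n"] by (simp add: zero_less_power2)
qed

lemma f_norm_eq_scale:
  "f_norm k a n = (\<lambda>z. inverse (complex_of_real (sob_norm k (u_poly a n))) * u_poly a n z)"
  unfolding f_norm_def by (simp add: divide_inverse_commute)

lemma circ_norm_f_norm: "circ_norm (f_norm k a n) = circ_norm (u_poly a n) / sob_norm k (u_poly a n)"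
  using sob_norm_nonneg[of k "u_poly a n"]
  by (simp add: f_norm_eq_scale circ_norm_scale norm_inverse divide_inverse_commute)

lemma arc_norm_f_norm: "arc_norm (f_norm k a n) = arc_norm (u_poly a n) / sob_norm k (u_poly a n)"
  using sob_norm_nonneg[of k "u_poly a n"]
  by (simp add: f_norm_eq_scale arc_norm_scale norm_inverse divide_inverse_commute)

lemma arc_norm_f_norm_pos:
  assumes "1 < a"
  shows "0 < arc_norm (f_norm k a n)"
proof -
  have "0 < arc_moment a n" using assms by (intro cis_sqdist_moment_pos) auto
  then show ?thesis
    using sob_norm_u_poly_pos[OF assms, of k n] by (simp add: arc_norm_f_norm arc_norm_u_poly)
qed

section \<open>Asymptotics as n tends to infinity\<close>

lemma sob_norm_u_poly_sq_asymp:
  assumes "1 < a"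
  shows "(\<lambda>n. sob_norm k (u_poly a n) ^ 2 / (real n ^ (2*k) * circle_moment a n))
    \<longlonglongrightarrow> 1 / (2*pi * ((a + 1)^2) ^ k)"
proof -
  define W where "W = (a + 1)^2"
  have moment_pos: "0 < circle_moment a n" for n using assms by (intro cis_sqdist_moment_pos) auto
  have shift: "(\<lambda>n. circle_moment a (n - j) / circle_moment a n) \<longlonglongrightarrow> 1 / W ^ j" for j
    unfolding W_def using assms moment_pos
    by (intro shifted_ratio_tendsto circle_moment_ratio_tendsto) auto
  define summand where "summand n j = (real (\<Prod>i<j. n - i) / real n ^ j)^2 * (1 / real n)^(2*(k-j))
      * (circle_moment a (n - j) / circle_moment a n) / (2*pi)" for n j
  \<comment> \<open>Only the top derivative survives: the j-th term carries the extra factor n^(2(j-k)).\<close>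
  have "(\<lambda>n. \<Sum>j\<le>k. summand n j) \<longlonglongrightarrow> (\<Sum>j\<le>k. 1^2 * 0^(2*(k-j)) * (1 / W^j) / (2*pi))"
    unfolding summand_def
    by (intro tendsto_sum tendsto_divide tendsto_mult tendsto_power tendsto_const
        falling_product_over_power_tendsto shift lim_const_over_n) simp
  also have "(\<Sum>j\<le>k. 1^2 * 0^(2*(k-j)) * (1 / W^j) / (2*pi)) = (\<Sum>j\<le>k. if j = k then 1 / (2*pi * W^k) else 0)"
    by (intro sum.cong) auto
  finally have "(\<lambda>n. \<Sum>j\<le>k. summand n j) \<longlonglongrightarrow> 1 / (2*pi * W^k)" by simp
  moreover have "eventually (\<lambda>n. (\<Sum>j\<le>k. summand n j)
      = sob_norm k (u_poly a n) ^ 2 / (real n ^ (2*k) * circle_moment a n)) sequentially"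
    using eventually_ge_at_top[of 1]
  proof eventually_elim
    case (elim n)
    have "summand n j = real (\<Prod>i<j. n - i) ^ 2 * circle_moment a (n - j)
        / (2*pi * (real n ^ (2*k) * circle_moment a n))" if "j \<le> k" for j
    proof -
      have "2 * k = j * 2 + 2 * (k - j)" using that by simp
      then have "real n ^ (2*k) = (real n ^ j)^2 * real n ^ (2*(k-j))"
        by (simp only: power_add power_mult)
      then show ?thesis using elim moment_pos[of n]
        by (simp add: summand_def field_simps power_divide)
    qed
    then show ?case
      by (simp add: sob_norm_u_poly_sq sum_divide_distrib)
  qed
  ultimately show ?thesis unfolding W_def by (simp add: tendsto_cong)
qed

lemma circ_norm_f_norm_asymp:
  assumes "1 < a"
  shows "(\<lambda>n. real n ^ k * circ_norm (f_norm k a n)) \<longlonglongrightarrow> (a + 1) ^ k"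
proof -
  define R where "R n = sob_norm k (u_poly a n) ^ 2 / (real n ^ (2*k) * circle_moment a n)" for n
  have "(\<lambda>n. sqrt (1 / (2*pi * R n))) \<longlonglongrightarrow> sqrt (1 / (2*pi * (1 / (2*pi * ((a + 1)^2) ^ k))))"
    unfolding R_def using assms
    by (intro tendsto_real_sqrt tendsto_divide tendsto_mult tendsto_const sob_norm_u_poly_sq_asymp) auto
  also have "sqrt (1 / (2*pi * (1 / (2*pi * ((a + 1)^2) ^ k)))) = (a + 1) ^ k"
    using assms by (simp flip: power_mult) (simp add: power_mult mult.commute[of 2])
  finally have "(\<lambda>n. sqrt (1 / (2*pi * R n))) \<longlonglongrightarrow> (a + 1) ^ k" .
  moreover have "eventually (\<lambda>n. sqrt (1 / (2*pi * R n)) = real n ^ k * circ_norm (f_norm k a n))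
      sequentially"
    using eventually_ge_at_top[of 1]
  proof eventually_elim
    case (elim n)
    have "0 < circle_moment a n" using assms by (intro cis_sqdist_moment_pos) auto
    then have "1 / (2*pi * R n) = (real n ^ k)^2 * (circle_moment a n / (2*pi)) / sob_norm k (u_poly a n) ^ 2"
      using elim sob_norm_u_poly_pos[OF assms, of k n]
      by (simp add: R_def field_simps flip: power_mult)
    then show ?case
      using circle_moment_nonneg[of a n] sob_norm_nonneg[of k "u_poly a n"]
      by (simp add: circ_norm_f_norm circ_norm_u_poly real_sqrt_mult real_sqrt_divide)
  qed
  ultimately show ?thesis by (simp add: tendsto_cong)
qed

lemma ln_sob_norm_u_poly_over_n:
  assumes "1 < a"
  shows "(\<lambda>n. ln (sob_norm k (u_poly a n)) / n) \<longlonglongrightarrow> ln ((a + 1)^2) / 2"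
proof -
  define R where "R n = sob_norm k (u_poly a n) ^ 2 / (real n ^ (2*k) * circle_moment a n)" for n
  have "(\<lambda>n. (ln (R n) * (1 / real n) + 2 * real k * (ln (real n) / real n)
      + ln (circle_moment a n) / real n) / 2)
      \<longlonglongrightarrow> (ln (1 / (2*pi * ((a + 1)^2) ^ k)) * 0 + 2 * real k * 0 + ln ((a + 1)^2)) / 2"
    (is "?f \<longlonglongrightarrow> _")
    unfolding R_def using assms
    by (intro tendsto_divide tendsto_add tendsto_mult tendsto_const tendsto_ln lim_ln_over_n
        sob_norm_u_poly_sq_asymp lim_const_over_n ln_circle_moment_over_n) auto
  also have "(ln (1 / (2*pi * ((a + 1)^2) ^ k)) * 0 + 2 * real k * 0 + ln ((a + 1)^2)) / 2
      = ln ((a + 1)^2) / 2"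
    by simp
  finally have "?f \<longlonglongrightarrow> ln ((a + 1)^2) / 2" .
  moreover have "eventually (\<lambda>n. (ln (R n) * (1 / real n) + 2 * real k * (ln (real n) / real n)
      + ln (circle_moment a n) / real n) / 2 = ln (sob_norm k (u_poly a n)) / n) sequentially"
    using eventually_ge_at_top[of 1]
  proof eventually_elim
    case (elim n)
    have M: "0 < circle_moment a n" using assms by (intro cis_sqdist_moment_pos) auto
    have S: "0 < sob_norm k (u_poly a n)" by (rule sob_norm_u_poly_pos[OF assms])
    have R: "0 < R n" using elim M S by (simp add: R_def)
    have "2 * ln (sob_norm k (u_poly a n)) = ln (sob_norm k (u_poly a n) ^ 2)"
      using S by (simp add: ln_realpow)
    also have "sob_norm k (u_poly a n) ^ 2 = R n * real n ^ (2*k) * circle_moment a n"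
      using elim M by (simp add: R_def)
    also have "ln \<dots> = ln (R n) + 2 * real k * ln (real n) + ln (circle_moment a n)"
      using R M elim by (simp add: ln_mult ln_realpow)
    finally show ?case using elim by (simp add: field_simps)
  qed
  ultimately show ?thesis by (rule Lim_transform_eventually)
qed

lemma ln_inverse_arc_norm_f_norm_over_n:
  assumes "1 < a"
  shows "(\<lambda>n. ln (1 / arc_norm (f_norm k a n)) / n)
    \<longlonglongrightarrow> (ln ((a + 1)^2) - ln (1 + a^2)) / 2"
proof -
  have "(\<lambda>n. ln (sob_norm k (u_poly a n)) / n - (ln (arc_moment a n) / n - ln pi / n) / 2)
      \<longlonglongrightarrow> ln ((a + 1)^2) / 2 - (ln (1 + a^2) - 0) / 2"
    using assms
    by (intro tendsto_diff tendsto_divide tendsto_const ln_sob_norm_u_poly_over_n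
        ln_arc_moment_over_n lim_const_over_n) auto
  moreover have "eventually (\<lambda>n. ln (sob_norm k (u_poly a n)) / n - (ln (arc_moment a n) / n - ln pi / n) / 2
      = ln (1 / arc_norm (f_norm k a n)) / n) sequentially"
  proof (rule always_eventually, intro allI)
    fix n
    have "0 < arc_moment a n" using assms by (intro cis_sqdist_moment_pos) auto
    then have "ln (1 / arc_norm (f_norm k a n))
        = ln (sob_norm k (u_poly a n)) - (ln (arc_moment a n) - ln pi) / 2"
      using sob_norm_u_poly_pos[OF assms, of k n]
      by (simp add: arc_norm_f_norm arc_norm_u_poly ln_div ln_sqrt)
    then show "ln (sob_norm k (u_poly a n)) / n - (ln (arc_moment a n) / n - ln pi / n) / 2
        = ln (1 / arc_norm (f_norm k a n)) / n"
      by (simp add: diff_divide_distrib)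
  qed
  ultimately show ?thesis by (simp add: tendsto_cong diff_divide_distrib)
qed

lemma arc_norm_f_norm_tendsto_0:
  assumes "1 < a"
  shows "(\<lambda>n. arc_norm (f_norm k a n)) \<longlonglongrightarrow> 0"
proof -
  define L where "L n = ln (1 / arc_norm (f_norm k a n))" for n
  have "0 < (ln ((a + 1)^2) - ln (1 + a^2)) / 2"
    using assms ln_sq_add_one_less[of a] by simp
  then have "filterlim (\<lambda>n. L n / n * n) at_top sequentially"
    unfolding L_def
    by (intro filterlim_tendsto_pos_mult_at_top[OF ln_inverse_arc_norm_f_norm_over_n[OF assms]]
        filterlim_real_sequentially)
  moreover have "eventually (\<lambda>n. L n / n * n = L n) sequentially"
    using eventually_ge_at_top[of 1] by eventually_elim simp
  ultimately have "filterlim L at_top sequentially"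
    using filterlim_cong by fastforce
  then have "(\<lambda>n. inverse (exp (L n))) \<longlonglongrightarrow> 0"
    by (intro tendsto_inverse_0_at_top filterlim_compose[OF exp_at_top])
  moreover have "inverse (exp (L n)) = arc_norm (f_norm k a n)" for n
    using arc_norm_f_norm_pos[OF assms] by (simp add: L_def)
  ultimately show ?thesis by simp
qed

lemma beta_seq_tendsto:
  assumes "1 < a"
  shows "beta_seq k a \<longlonglongrightarrow> ((a + 1) * ((ln ((a + 1)^2) - ln (1 + a^2)) / 2)) ^ k"
proof -
  have "(\<lambda>n. (real n ^ k * circ_norm (f_norm k a n)) * (ln (1 / arc_norm (f_norm k a n)) / n) ^ k)
      \<longlonglongrightarrow> (a + 1) ^ k * ((ln ((a + 1)^2) - ln (1 + a^2)) / 2) ^ k"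
    (is "?f \<longlonglongrightarrow> _")
    using assms by (intro tendsto_mult tendsto_power circ_norm_f_norm_asymp
        ln_inverse_arc_norm_f_norm_over_n)
  also have "(a + 1) ^ k * ((ln ((a + 1)^2) - ln (1 + a^2)) / 2) ^ k
      = ((a + 1) * ((ln ((a + 1)^2) - ln (1 + a^2)) / 2)) ^ k"
    by (rule power_mult_distrib[symmetric])
  finally have "?f \<longlonglongrightarrow> ((a + 1) * ((ln ((a + 1)^2) - ln (1 + a^2)) / 2)) ^ k" .
  moreover have "eventually (\<lambda>n. (real n ^ k * circ_norm (f_norm k a n))
      * (ln (1 / arc_norm (f_norm k a n)) / n) ^ k = beta_seq k a n) sequentially"
    using eventually_ge_at_top[of 1]
    by eventually_elim (simp add: beta_seq_def power_divide)
  ultimately show ?thesis by (rule Lim_transform_eventually)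
qed

theorem proposition1:
  fixes k :: nat
  assumes "k \<ge> 1"
  shows "(\<forall>a::real. a > 1 \<longrightarrow>
            (\<lambda>n. arc_norm (f_norm k a n)) \<longlonglongrightarrow> 0 \<and>
            convergent (beta_seq k a) \<and> lim (beta_seq k a) > 0)
         \<and> ((\<lambda>a. lim (beta_seq k a)) \<longlongrightarrow> 1) at_top"
proof -
  define \<beta> where "\<beta> a = ((a + 1) * ((ln ((a + 1)^2) - ln (1 + a^2)) / 2)) ^ k" for a :: real
  have lim_beta: "lim (beta_seq k a) = \<beta> a" if "1 < a" for a
    using beta_seq_tendsto[OF that] unfolding \<beta>_def by (rule limI)
  have beta_pos: "0 < \<beta> a" if "1 < a" for a
    using that ln_sq_add_one_less[of a] by (simp add: \<beta>_def)
  have "(\<beta> \<longlongrightarrow> 1) at_top"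
    unfolding \<beta>_def by real_asymp
  moreover have "eventually (\<lambda>a. \<beta> a = lim (beta_seq k a)) at_top"
    using eventually_gt_at_top[of 1] by eventually_elim (simp add: lim_beta)
  ultimately have "((\<lambda>a. lim (beta_seq k a)) \<longlongrightarrow> 1) at_top"
    by (rule Lim_transform_eventually)
  then show ?thesis
    using arc_norm_f_norm_tendsto_0 convergentI[OF beta_seq_tendsto] lim_beta beta_pos by auto
qed

end
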